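(* Let $n\ge1$, $r\ge1$ and $\underline{m}=(m_0,\dots,m_n)$ positive integers. The projection $\sum_{i=0}^n p_{v_i^0}$ is full in $C^*\big(\overline{L}_{2n+1}^{r;\underline{m}}\big)$, i.e. the closed two-sided ideal it generates is all of $C^*\big(\overline{L}_{2n+1}^{r;\underline{m}}\big)$.
   Context: Graph conventions: for a directed graph $E=(E^0,E^1,r,s)$, $C^*(E)$ is the universal $C^*$-algebra generated by mutually orthogonal projections $p_v$ ($v\in E^0$) and partial isometries $s_e$ ($e\in E^1$) with mutually orthogonal ranges such that $s_e^*s_e=p_{r(e)}$, $s_es_e^*\le p_{s(e)}$, and $p_v=\sum_{s(e)=v}s_es_e^*$ whenever $s^{-1}(v)$ is finite and nonempty. $\Lambda=L_{2n+1}\times_c\mathbb{Z}_r$ is the graph with vertices $(v_i,k)$, $0\le i\le n$, $k\in\mathbb{Z}_r$, and edges $(e_{ij},k)$, $0\le i\le j\le n$, $k\in\mathbb{Z}_r$, with source $(v_i,k-m_i\bmod r)$ and range $(v_j,k)$. A path from $(v_i,s)$ to $(v_j,t)$ is admissible if none of the vertices it passes through other than its source and range lies in $\{(v_\ell,k): i\le\ell\le j,\ 0\le k\le\gcd(m_\ell,r)-1\}$; $n_{ij}^{st}$ is the number of such paths. $H$ is the smallest hereditary subset of $\Lambda^0$ containing all $(v_i,0)$, and $S_i=\{k\in\{0,\dots,\gcd(m_i,r)-1\}:(v_i,k)\in H\}$ (note $0\in S_i$). The graph $\overline{L}_{2n+1}^{r;\underline{m}}$ has vertices $v_i^k$ ($k\in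 S_i$) and edges $e_{ij;a}^{st}$ ($0\le i\le j\le n$, $s\in S_i$, $t\in S_j$, $1\le a\le n_{ij}^{st}$) from $v_i^s$ to $v_j^t$. *)

theory Defs
  imports "HOL-Analysis.Analysis"
begin

class cstar_algebra = banach + real_normed_algebra +
  fixes cscale :: "complex \<Rightarrow> 'a \<Rightarrow> 'a"
    and cstar :: "'a \<Rightarrow> 'a"
  assumes cscale_of_real: "cscale (complex_of_real c) x = scaleR c x"
    and cscale_add_left: "cscale (a + b) x = cscale a x + cscale b x"
    and cscale_add_right: "cscale a (x + y) = cscale a x + cscale a y"
    and cscale_mult: "cscale (a * b) x = cscale a (cscale b x)"
    and cscale_one: "cscale 1 x = x"
    and norm_cscale: "norm (cscale a x) = cmod a * norm x"
    and cscale_mult_left: "cscale a (x * y) = cscale a x * y"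
    and cscale_mult_right: "cscale a (x * y) = x * cscale a y"
    and cstar_cstar: "cstar (cstar x) = x"
    and cstar_add: "cstar (x + y) = cstar x + cstar y"
    and cstar_cscale: "cstar (cscale a x) = cscale (cnj a) (cstar x)"
    and cstar_mult: "cstar (x * y) = cstar y * cstar x"
    and cstar_identity: "norm (cstar x * x) = norm x ^ 2"

definition cstar_subalgebra :: "'a::cstar_algebra set \<Rightarrow> bool" where
  "cstar_subalgebra B \<longleftrightarrow> closed B \<and> 0 \<in> B \<and>
     (\<forall>x\<in>B. \<forall>y\<in>B. x + y \<in> B \<and> x * y \<in> B) \<and>
     (\<forall>c. \<forall>x\<in>B. cscale c x \<in> B) \<and> (\<forall>x\<in>B. cstar x \<in> B)"

definition cstar_gen :: "'a::cstar_algebra set \<Rightarrow> 'a set" where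
  "cstar_gen G = \<Inter>{B. G \<subseteq> B \<and> cstar_subalgebra B}"

definition closed_ideal_in :: "'a::cstar_algebra set \<Rightarrow> 'a set \<Rightarrow> bool" where
  "closed_ideal_in D I \<longleftrightarrow> I \<subseteq> D \<and> closed I \<and> 0 \<in> I \<and>
     (\<forall>x\<in>I. \<forall>y\<in>I. x + y \<in> I) \<and> (\<forall>c. \<forall>x\<in>I. cscale c x \<in> I) \<and>
     (\<forall>d\<in>D. \<forall>x\<in>I. d * x \<in> I \<and> x * d \<in> I)"

definition ideal_gen_in :: "'a::cstar_algebra set \<Rightarrow> 'a \<Rightarrow> 'a set" where
  "ideal_gen_in D p = \<Inter>{I. closed_ideal_in D I \<and> p \<in> I}"

text \<open>A Cuntz--Krieger E-family in a C*-algebra for a directed graph E = (V, Ed, rg, sr),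
with the conventions: s_e^* s_e = p_{r(e)}, s_e s_e^* \<le> p_{s(e)}.\<close>
definition CK_family ::
  "'v set \<Rightarrow> 'e set \<Rightarrow> ('e \<Rightarrow> 'v) \<Rightarrow> ('e \<Rightarrow> 'v) \<Rightarrow> ('v \<Rightarrow> 'a::cstar_algebra) \<Rightarrow> ('e \<Rightarrow> 'a) \<Rightarrow> bool"
  where
  "CK_family V Ed sr rg P S \<longleftrightarrow>
     (\<forall>v\<in>V. P v * P v = P v \<and> cstar (P v) = P v) \<and>
     (\<forall>v\<in>V. \<forall>w\<in>V. v \<noteq> w \<longrightarrow> P v * P w = 0) \<and>
     (\<forall>e\<in>Ed. cstar (S e) * S e = P (rg e)) \<and>
     (\<forall>e\<in>Ed. P (sr e) * (S e * cstar (S e)) = S e * cstar (S e)) \<and>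
     (\<forall>e\<in>Ed. \<forall>f\<in>Ed. e \<noteq> f \<longrightarrow> (S e * cstar (S e)) * (S f * cstar (S f)) = 0) \<and>
     (\<forall>v\<in>V. finite {e\<in>Ed. sr e = v} \<and> {e\<in>Ed. sr e = v} \<noteq> {} \<longrightarrow>
        P v = (\<Sum>e\<in>{e\<in>Ed. sr e = v}. S e * cstar (S e)))"

text \<open>Vertex (v_i,k) is the pair (i,k); edge (e_ij,k) is the triple (i,j,k).\<close>
definition Lam_V :: "nat \<Rightarrow> nat \<Rightarrow> (nat \<times> nat) set" where
  "Lam_V n r = {(i,k). i \<le> n \<and> k < r}"

definition Lam_E :: "nat \<Rightarrow> nat \<Rightarrow> (nat \<times> nat \<times> nat) set" where
  "Lam_E n r = {(i,j,k). i \<le> j \<and> j \<le> n \<and> k < r}"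

definition Lam_src :: "nat \<Rightarrow> (nat \<Rightarrow> nat) \<Rightarrow> nat \<times> nat \<times> nat \<Rightarrow> nat \<times> nat" where
  "Lam_src r m e = (case e of (i,j,k) \<Rightarrow> (i, nat ((int k - int (m i)) mod int r)))"

definition Lam_rng :: "nat \<times> nat \<times> nat \<Rightarrow> nat \<times> nat" where
  "Lam_rng e = (case e of (i,j,k) \<Rightarrow> (j,k))"

definition Lam_path :: "nat \<Rightarrow> nat \<Rightarrow> (nat \<Rightarrow> nat) \<Rightarrow> (nat \<times> nat \<times> nat) list \<Rightarrow> bool" where
  "Lam_path n r m es \<longleftrightarrow> es \<noteq> [] \<and> set es \<subseteq> Lam_E n r \<and>
     (\<forall>q. Suc q < length es \<longrightarrow> Lam_rng (es ! q) = Lam_src r m (es ! Suc q))"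

definition admissible :: "nat \<Rightarrow> nat \<Rightarrow> (nat \<Rightarrow> nat) \<Rightarrow> nat \<Rightarrow> nat \<Rightarrow> nat \<Rightarrow> nat
    \<Rightarrow> (nat \<times> nat \<times> nat) list \<Rightarrow> bool" where
  "admissible n r m i s j t es \<longleftrightarrow> Lam_path n r m es \<and>
     Lam_src r m (hd es) = (i,s) \<and> Lam_rng (last es) = (j,t) \<and>
     (\<forall>q. Suc q < length es \<longrightarrow>
        Lam_rng (es ! q) \<notin> {(l,k). i \<le> l \<and> l \<le> j \<and> k < gcd (m l) r})"

definition n_paths :: "nat \<Rightarrow> nat \<Rightarrow> (nat \<Rightarrow> nat) \<Rightarrow> nat \<Rightarrow> nat \<Rightarrow> nat \<Rightarrow> nat \<Rightarrow> nat" where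
  "n_paths n r m i j s t = card {es. admissible n r m i s j t es}"

inductive_set Hset :: "nat \<Rightarrow> nat \<Rightarrow> (nat \<Rightarrow> nat) \<Rightarrow> (nat \<times> nat) set"
  for n r m where
  base: "i \<le> n \<Longrightarrow> (i,0) \<in> Hset n r m"
| step: "e \<in> Lam_E n r \<Longrightarrow> Lam_src r m e \<in> Hset n r m \<Longrightarrow> Lam_rng e \<in> Hset n r m"

definition S_set :: "nat \<Rightarrow> nat \<Rightarrow> (nat \<Rightarrow> nat) \<Rightarrow> nat \<Rightarrow> nat set" where
  "S_set n r m i = {k. k < gcd (m i) r \<and> (i,k) \<in> Hset n r m}"

text \<open>Vertex v_i^k is (i,k); edge e_{ij;a}^{st} is (i,j,s,t,a).\<close>
definition Lbar_V :: "nat \<Rightarrow> nat \<Rightarrow> (nat \<Rightarrow> nat) \<Rightarrow> (nat \<times> nat) set" where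
  "Lbar_V n r m = {(i,k). i \<le> n \<and> k \<in> S_set n r m i}"

definition Lbar_E :: "nat \<Rightarrow> nat \<Rightarrow> (nat \<Rightarrow> nat) \<Rightarrow> (nat \<times> nat \<times> nat \<times> nat \<times> nat) set" where
  "Lbar_E n r m = {(i,j,s,t,a). i \<le> j \<and> j \<le> n \<and> s \<in> S_set n r m i \<and> t \<in> S_set n r m j \<and>
      1 \<le> a \<and> a \<le> n_paths n r m i j s t}"

definition Lbar_src :: "nat \<times> nat \<times> nat \<times> nat \<times> nat \<Rightarrow> nat \<times> nat" where
  "Lbar_src e = (case e of (i,j,s,t,a) \<Rightarrow> (i,s))"

definition Lbar_rng :: "nat \<times> nat \<times> nat \<times> nat \<times> nat \<Rightarrow> nat \<times> nat" where
  "Lbar_rng e = (case e of (i,j,s,t,a) \<Rightarrow> (j,t))"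

end

theory Submission
  imports Defs
begin

(* The vertex projections of \bar L add up to a unit Q of C*(\bar L): Q fixes every
   generator from both sides. Hence a closed ideal containing every p_v is everything, and
   since an ideal containing p_{s(e)} contains p_{r(e)} = s_e^* p_{s(e)} s_e, it suffices
   that every vertex of \bar L is reachable from some v_i^0.

   A vertex v_j^t lies in H, so in Lambda it is reached from some (v_i,0) by a path. Cutting
   this path at its visits to vertices (v_l,k) with k < gcd(m_l,r), which are vertices of
   \bar L, leaves admissible pieces, and each of them yields an edge of \bar L. That edge
   exists only if n_ij^st > 0, i.e. if the admissible paths form a finite set: the level l
   never decreases along a path of Lambda, and among r consecutive vertices at level l, with
   second coordinates k, k + m_l, ..., k + (r-1) m_l mod r, one lies below gcd(m_l,r). *)

section \<open>C*-algebras\<close>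

lemma cstar_zero: "cstar (0::'a::cstar_algebra) = 0"
  using cstar_add[of 0 0] by simp

lemma cstar_diff: "cstar (x - y :: 'a::cstar_algebra) = cstar x - cstar y"
  using cstar_add[of "x - y" y] by (simp add: eq_diff_eq)

lemma cstar_sum: "cstar (\<Sum>x\<in>A. f x) = (\<Sum>x\<in>A. cstar (f x :: 'a::cstar_algebra))"
  by (induction A rule: infinite_finite_induct) (simp_all add: cstar_zero cstar_add)

lemma partial_isometry_mult_initial_projection:
  fixes s :: "'a::cstar_algebra"
  assumes idem: "cstar s * s * (cstar s * s) = cstar s * s"
  shows "s * (cstar s * s) = s"
proof -
  define p where "p = cstar s * s"
  define x where "x = s - s * p"
  have "cstar p = p" unfolding p_def by (simp add: cstar_mult cstar_cstar)
  then have cx: "cstar x = cstar s - p * cstar s"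
    unfolding x_def by (simp add: cstar_diff cstar_mult)
  have "cstar x * x = cstar s * s - cstar s * s * p - p * (cstar s * s) + p * (cstar s * s) * p"
    unfolding cx unfolding x_def by (simp add: algebra_simps)
  also have "\<dots> = 0" using idem unfolding p_def[symmetric] by (simp add: mult.assoc)
  finally have "norm x ^ 2 = 0" by (metis cstar_identity norm_zero)
  then show ?thesis unfolding x_def p_def by simp
qed

lemma mult_sum_orthogonal_idem:
  fixes P :: "'v \<Rightarrow> 'a::semiring_0"
  assumes "finite V" "v \<in> V" "P v * P v = P v"
    and "\<And>w. w \<in> V \<Longrightarrow> w \<noteq> v \<Longrightarrow> P v * P w = 0 \<and> P w * P v = 0"
  shows "P v * sum P V = P v" and "sum P V * P v = P v"
proof -
  have "P v * sum P V = P v * P v + (\<Sum>w\<in>V - {v}. P v * P w)"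
    using assms(1,2) by (subst sum_distrib_left) (simp add: sum.remove)
  with assms show "P v * sum P V = P v" by (simp add: sum.neutral)
  have "sum P V * P v = P v * P v + (\<Sum>w\<in>V - {v}. P w * P v)"
    using assms(1,2) by (subst sum_distrib_right) (simp add: sum.remove)
  with assms show "sum P V * P v = P v" by (simp add: sum.neutral)
qed

lemma cstar_subalgebra_cstar_gen: "cstar_subalgebra (cstar_gen G)"
  unfolding cstar_gen_def cstar_subalgebra_def by (auto intro!: closed_Inter)

lemma cstar_gen_superset: "G \<subseteq> cstar_gen G"
  unfolding cstar_gen_def by auto

lemma cstar_gen_least: "G \<subseteq> B \<Longrightarrow> cstar_subalgebra B \<Longrightarrow> cstar_gen G \<subseteq> B"
  unfolding cstar_gen_def by auto

lemma cstar_subalgebra_sum: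
  assumes "cstar_subalgebra B" and "\<And>x. x \<in> A \<Longrightarrow> f x \<in> B"
  shows "(\<Sum>x\<in>A. f x) \<in> B"
  using assms(2) by (induction A rule: infinite_finite_induct)
    (use assms(1) in \<open>auto simp: cstar_subalgebra_def\<close>)

lemma closed_ideal_in_sum:
  assumes "closed_ideal_in D J" and "\<And>x. x \<in> A \<Longrightarrow> f x \<in> J"
  shows "(\<Sum>x\<in>A. f x) \<in> J"
  using assms(2) by (induction A rule: infinite_finite_induct)
    (use assms(1) in \<open>auto simp: closed_ideal_in_def\<close>)

lemma subset_closed_ideal_in_if_right_unit:
  assumes "closed_ideal_in D J" and "u \<in> J" and "\<And>d. d \<in> D \<Longrightarrow> d * u = d"
  shows "D \<subseteq> J"
proof
  fix d assume "d \<in> D"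
  then have "d * u \<in> J" using assms(1,2) unfolding closed_ideal_in_def by blast
  with \<open>d \<in> D\<close> show "d \<in> J" using assms(3) by simp
qed

lemma ideal_gen_in_eqI:
  assumes "cstar_subalgebra D" and "p \<in> D"
    and "\<And>J. closed_ideal_in D J \<Longrightarrow> p \<in> J \<Longrightarrow> D \<subseteq> J"
  shows "ideal_gen_in D p = D"
proof
  have "closed_ideal_in D D"
    using assms(1) unfolding closed_ideal_in_def cstar_subalgebra_def by blast
  then show "ideal_gen_in D p \<subseteq> D" unfolding ideal_gen_in_def using assms(2) by blast
  show "D \<subseteq> ideal_gen_in D p" unfolding ideal_gen_in_def using assms(3) by blast
qed

lemma cstar_gen_two_sided_unit:
  fixes u :: "'a::cstar_algebra"
  assumes "cstar u = u" and "\<And>g. g \<in> G \<Longrightarrow> g * u = g \<and> u * g = g"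
    and "d \<in> cstar_gen G"
  shows "d * u = d \<and> u * d = d"
proof -
  let ?U = "{d. d * u = d \<and> u * d = d}"
  have "cstar_subalgebra ?U"
    unfolding cstar_subalgebra_def
  proof (intro conjI ballI allI)
    show "closed ?U" by (intro closed_Collect_conj closed_Collect_eq continuous_intros)
    show "0 \<in> ?U" by simp
    fix x y assume "x \<in> ?U" and "y \<in> ?U"
    then show "x + y \<in> ?U" and "x * y \<in> ?U" by (simp_all add: algebra_simps) (metis mult.assoc)
  next
    fix c x assume "x \<in> ?U"
    then show "cscale c x \<in> ?U"
      by (simp add: cscale_mult_left[symmetric] cscale_mult_right[symmetric])
  next
    fix x assume "x \<in> ?U"
    moreover have "cstar x * u = cstar (u * x)" and "u * cstar x = cstar (x * u)"
      using assms(1) by (simp_all add: cstar_mult)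
    ultimately show "cstar x \<in> ?U" by simp
  qed
  moreover have "G \<subseteq> ?U" using assms(2) by blast
  ultimately show ?thesis using cstar_gen_least assms(3) by blast
qed

section \<open>Cuntz--Krieger families of finite graphs\<close>

definition edge_rel :: "'e set \<Rightarrow> ('e \<Rightarrow> 'v) \<Rightarrow> ('e \<Rightarrow> 'v) \<Rightarrow> ('v \<times> 'v) set" where
  "edge_rel Ed sr rg = {(sr e, rg e) | e. e \<in> Ed}"

lemma CK_family_projections:
  assumes "CK_family V Ed sr rg P S" and "v \<in> V"
  shows "P v * P v = P v" and "cstar (P v) = P v"
    and "\<And>w. w \<in> V \<Longrightarrow> w \<noteq> v \<Longrightarrow> P v * P w = 0 \<and> P w * P v = 0"
proof -
  have "\<forall>v\<in>V. P v * P v = P v \<and> cstar (P v) = P v"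
    using assms(1) unfolding CK_family_def by (elim conjE) assumption
  moreover have "\<forall>v\<in>V. \<forall>w\<in>V. v \<noteq> w \<longrightarrow> P v * P w = 0"
    using assms(1) unfolding CK_family_def by (elim conjE) assumption
  ultimately show "P v * P v = P v" "cstar (P v) = P v"
    and "\<And>w. w \<in> V \<Longrightarrow> w \<noteq> v \<Longrightarrow> P v * P w = 0 \<and> P w * P v = 0" using assms(2) by auto
qed

lemma CK_family_edges:
  assumes "CK_family V Ed sr rg P S" and "e \<in> Ed"
  shows "cstar (S e) * S e = P (rg e)" and "P (sr e) * (S e * cstar (S e)) = S e * cstar (S e)"
proof -
  have "\<forall>e\<in>Ed. cstar (S e) * S e = P (rg e)"
    using assms(1) unfolding CK_family_def by (elim conjE) assumption
  moreover have "\<forall>e\<in>Ed. P (sr e) * (S e * cstar (S e)) = S e * cstar (S e)"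
    using assms(1) unfolding CK_family_def by (elim conjE) assumption
  ultimately show "cstar (S e) * S e = P (rg e)"
    and "P (sr e) * (S e * cstar (S e)) = S e * cstar (S e)" using assms(2) by auto
qed

lemma CK_family_partial_isometry:
  assumes CK: "CK_family V Ed sr rg P S" and "e \<in> Ed" and "rg e \<in> V"
  shows "S e * P (rg e) = S e" and "P (sr e) * S e = S e"
proof -
  note range = CK_family_edges(1)[OF CK \<open>e \<in> Ed\<close>]
    and source = CK_family_edges(2)[OF CK \<open>e \<in> Ed\<close>]
  have "P (rg e) * P (rg e) = P (rg e)" using CK_family_projections(1)[OF CK \<open>rg e \<in> V\<close>] .
  with range show right: "S e * P (rg e) = S e"
    using partial_isometry_mult_initial_projection[of "S e"] by simp
  have "P (sr e) * S e = P (sr e) * (S e * cstar (S e)) * S e"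
    using right range by (simp add: mult.assoc)
  also have "\<dots> = S e" using source right range by (simp add: mult.assoc)
  finally show "P (sr e) * S e = S e" .
qed

lemma CK_family_sum_right_unit:
  assumes CK: "CK_family V Ed sr rg P S" and "finite V" and "sr ` Ed \<subseteq> V" "rg ` Ed \<subseteq> V"
    and "d \<in> cstar_gen (P ` V \<union> S ` Ed)"
  shows "d * sum P V = d"
proof -
  have unitP: "P v * sum P V = P v \<and> sum P V * P v = P v" if "v \<in> V" for v
    using mult_sum_orthogonal_idem[OF \<open>finite V\<close> that] CK_family_projections[OF CK that] by blast
  have unitS: "S e * sum P V = S e \<and> sum P V * S e = S e" if "e \<in> Ed" for e
  proof -
    have "sr e \<in> V" and "rg e \<in> V" using that assms(3,4) by auto
    note SP = CK_family_partial_isometry[OF CK that \<open>rg e \<in> V\<close>]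
    have "S e * sum P V = S e * (P (rg e) * sum P V)"
      using SP(1) by (simp add: mult.assoc[symmetric])
    also have "\<dots> = S e" using unitP[OF \<open>rg e \<in> V\<close>] SP(1) by simp
    moreover have "sum P V * S e = (sum P V * P (sr e)) * S e" using SP(2) by (simp add: mult.assoc)
    moreover have "\<dots> = S e" using unitP[OF \<open>sr e \<in> V\<close>] SP(2) by simp
    ultimately show ?thesis by simp
  qed
  have "cstar (sum P V) = sum P V" using CK_family_projections(2)[OF CK] by (simp add: cstar_sum)
  moreover have "g * sum P V = g \<and> sum P V * g = g" if "g \<in> P ` V \<union> S ` Ed" for g
    using that unitP unitS by blast
  ultimately show ?thesis using cstar_gen_two_sided_unit assms(5) by blast
qed

lemma CK_family_ideal_edge:
  assumes CK: "CK_family V Ed sr rg P S" and "e \<in> Ed" and "rg e \<in> V"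
    and J: "closed_ideal_in (cstar_gen (P ` V \<union> S ` Ed)) J" and "P (sr e) \<in> J"
  shows "P (rg e) \<in> J"
proof -
  let ?D = "cstar_gen (P ` V \<union> S ` Ed)"
  have ideal: "d * x \<in> J" "x * d \<in> J" if "d \<in> ?D" "x \<in> J" for d x
    using J that unfolding closed_ideal_in_def by auto
  have "S e \<in> ?D" using cstar_gen_superset[of "P ` V \<union> S ` Ed"] \<open>e \<in> Ed\<close> by blast
  moreover from this have "cstar (S e) \<in> ?D"
    using cstar_subalgebra_cstar_gen[of "P ` V \<union> S ` Ed"] unfolding cstar_subalgebra_def by auto
  ultimately have "cstar (S e) * (P (sr e) * S e) \<in> J" using ideal \<open>P (sr e) \<in> J\<close> by simp
  moreover note CK_family_edges(1)[OF CK \<open>e \<in> Ed\<close>]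
  ultimately show ?thesis using CK_family_partial_isometry(2)[OF assms(1-3)] by simp
qed

lemma CK_family_ideal_reachable:
  assumes CK: "CK_family V Ed sr rg P S" and "rg ` Ed \<subseteq> V"
    and J: "closed_ideal_in (cstar_gen (P ` V \<union> S ` Ed)) J"
    and "(w, v) \<in> (edge_rel Ed sr rg)\<^sup>*" and "P w \<in> J"
  shows "P v \<in> J"
  using assms(4,5)
proof (induction rule: rtrancl_induct)
  case (step y z)
  then obtain e where "e \<in> Ed" "y = sr e" "z = rg e" unfolding edge_rel_def by blast
  then show ?case using CK_family_ideal_edge[OF CK _ _ J] step assms(2) by blast
qed

theorem CK_family_full_if_reachable:
  assumes CK: "CK_family V Ed sr rg P S" and "finite V" and "sr ` Ed \<subseteq> V" "rg ` Ed \<subseteq> V"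
    and "W \<subseteq> V" and reach: "\<And>v. v \<in> V \<Longrightarrow> \<exists>w\<in>W. (w, v) \<in> (edge_rel Ed sr rg)\<^sup>*"
  shows "ideal_gen_in (cstar_gen (P ` V \<union> S ` Ed)) (sum P W) = cstar_gen (P ` V \<union> S ` Ed)"
proof (rule ideal_gen_in_eqI)
  let ?D = "cstar_gen (P ` V \<union> S ` Ed)"
  have PD: "P v \<in> ?D" if "v \<in> V" for v
    using cstar_gen_superset[of "P ` V \<union> S ` Ed"] that by blast
  show "cstar_subalgebra ?D" by (rule cstar_subalgebra_cstar_gen)
  show "sum P W \<in> ?D"
    by (rule cstar_subalgebra_sum[OF cstar_subalgebra_cstar_gen]) (use PD \<open>W \<subseteq> V\<close> in blast)
  fix J assume J: "closed_ideal_in ?D J" and "sum P W \<in> J"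
  have "P w \<in> J" if "w \<in> W" for w
  proof -
    have "finite W" using \<open>W \<subseteq> V\<close> \<open>finite V\<close> by (rule finite_subset)
    have "w \<in> V" using that \<open>W \<subseteq> V\<close> by blast
    have "\<And>v. v \<in> W \<Longrightarrow> v \<noteq> w \<Longrightarrow> P w * P v = 0 \<and> P v * P w = 0"
      using CK_family_projections(3)[OF CK \<open>w \<in> V\<close>] \<open>W \<subseteq> V\<close> by blast
    with \<open>finite W\<close> \<open>w \<in> W\<close> CK_family_projections(1)[OF CK \<open>w \<in> V\<close>]
    have "P w * sum P W = P w" by (rule mult_sum_orthogonal_idem(1))
    moreover have "P w * sum P W \<in> J"
      using J PD[OF \<open>w \<in> V\<close>] \<open>sum P W \<in> J\<close> unfolding closed_ideal_in_def by blast
    ultimately show ?thesis by simp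
  qed
  have "P v \<in> J" if "v \<in> V" for v
  proof -
    obtain w where "w \<in> W" and "(w, v) \<in> (edge_rel Ed sr rg)\<^sup>*" using reach \<open>v \<in> V\<close> by blast
    then show ?thesis using CK_family_ideal_reachable[OF CK \<open>rg ` Ed \<subseteq> V\<close> J] \<open>\<And>w. w \<in> W \<Longrightarrow> P w \<in> J\<close>
      by blast
  qed
  then have "sum P V \<in> J" by (rule closed_ideal_in_sum[OF J])
  moreover have "d * sum P V = d" if "d \<in> ?D" for d
    using CK_family_sum_right_unit[OF CK assms(2-4) that] .
  ultimately show "?D \<subseteq> J" by (rule subset_closed_ideal_in_if_right_unit[OF J])
qed

section \<open>Admissible paths in the skew product graph\<close>

lemma Lam_E_levels:
  assumes "e \<in> Lam_E n r"
  shows "fst (Lam_src r m e) \<le> fst (Lam_rng e)" and "fst (Lam_rng e) \<le> n" and "snd (Lam_rng e) < r"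
  using assms by (auto simp: Lam_E_def Lam_src_def Lam_rng_def)

lemma finite_Lam_E: "finite (Lam_E n r)"
  by (rule finite_subset[of _ "{..n} \<times> {..n} \<times> {..<r}"]) (auto simp: Lam_E_def)

lemma Lam_path_nth_in_Lam_E: "Lam_path n r m es \<Longrightarrow> q < length es \<Longrightarrow> es ! q \<in> Lam_E n r"
  unfolding Lam_path_def by (meson nth_mem subsetD)

lemma Lam_path_level_mono:
  assumes "Lam_path n r m es" and "q \<le> q'" and "q' < length es"
  shows "fst (Lam_rng (es ! q)) \<le> fst (Lam_rng (es ! q'))"
  using assms(2,3)
proof (induction q' rule: dec_induct)
  case (step k)
  have "Lam_rng (es ! k) = Lam_src r m (es ! Suc k)"
    using assms(1) step.prems unfolding Lam_path_def by blast
  then show ?case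
    using step Lam_E_levels(1)[where m = m, OF Lam_path_nth_in_Lam_E[OF assms(1) step.prems]]
    by simp
qed simp

lemma Lam_path_src_level_le:
  assumes "Lam_path n r m es" and "q < length es"
  shows "fst (Lam_src r m (hd es)) \<le> fst (Lam_rng (es ! q))"
proof -
  have "hd es = es ! 0" using assms(2) by (cases es) auto
  moreover have "0 < length es" using assms(2) by linarith
  ultimately have "fst (Lam_src r m (hd es)) \<le> fst (Lam_rng (es ! 0))"
    using Lam_E_levels(1)[where m = m, OF Lam_path_nth_in_Lam_E[OF assms(1)]] by simp
  also have "\<dots> \<le> fst (Lam_rng (es ! q))" using Lam_path_level_mono[OF assms(1)] assms(2) by simp
  finally show ?thesis .
qed

lemma admissible_levels:
  assumes "admissible n r m i s j t es" and "q < length es"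
  shows "i \<le> fst (Lam_rng (es ! q))" and "fst (Lam_rng (es ! q)) \<le> j" and "j \<le> n"
proof -
  have "es \<noteq> []" using assms(2) by auto
  then have path: "Lam_path n r m es" and src: "Lam_src r m (hd es) = (i, s)"
    and last: "Lam_rng (es ! (length es - 1)) = (j, t)"
    using assms(1) unfolding admissible_def by (auto simp: last_conv_nth)
  show "i \<le> fst (Lam_rng (es ! q))" using Lam_path_src_level_le[OF path assms(2)] src by simp
  have "length es - 1 < length es" using assms(2) by simp
  then show "fst (Lam_rng (es ! q)) \<le> j" and "j \<le> n"
    using Lam_path_level_mono[OF path _ \<open>length es - 1 < length es\<close>, of q]
      Lam_E_levels(2)[OF Lam_path_nth_in_Lam_E[OF path \<open>length es - 1 < length es\<close>]] last assms(2)
    by simp_all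
qed

lemma nat_mod_diff_add_cancel:
  fixes k a r :: nat
  assumes "k < r"
  shows "(nat ((int k - int a) mod int r) + a) mod r = k"
proof -
  have "int ((nat ((int k - int a) mod int r) + a) mod r)
      = ((int k - int a) mod int r + int a) mod int r"
    using assms by (simp add: of_nat_mod)
  also have "\<dots> = int k" using assms by (simp add: mod_add_left_eq)
  finally show ?thesis by simp
qed

lemma Lam_path_same_level_step:
  assumes "Lam_path n r m es" and "Suc q < length es"
    and "fst (Lam_rng (es ! Suc q)) = fst (Lam_rng (es ! q))"
  shows "snd (Lam_rng (es ! Suc q)) = (snd (Lam_rng (es ! q)) + m (fst (Lam_rng (es ! q)))) mod r"
proof -
  obtain a b k where e: "es ! Suc q = (a, b, k)" by (cases "es ! Suc q") auto
  have "k < r" using Lam_path_nth_in_Lam_E[OF assms(1,2)] e by (simp add: Lam_E_def)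
  have "Lam_rng (es ! q) = Lam_src r m (es ! Suc q)"
    using assms(1,2) unfolding Lam_path_def by blast
  then have "Lam_rng (es ! q) = (a, nat ((int k - int (m a)) mod int r))"
    using e by (simp add: Lam_src_def)
  then show ?thesis using nat_mod_diff_add_cancel[OF \<open>k < r\<close>] e by (simp add: Lam_rng_def)
qed

lemma Lam_path_same_level_run:
  assumes "Lam_path n r m es" and "q + p < length es"
    and "\<And>p'. p' \<le> p \<Longrightarrow> fst (Lam_rng (es ! (q + p'))) = l"
  shows "snd (Lam_rng (es ! (q + p))) = (snd (Lam_rng (es ! q)) + p * m l) mod r"
  using assms(2,3)
proof (induction p)
  case 0
  then show ?case using Lam_E_levels(3)[OF Lam_path_nth_in_Lam_E[OF assms(1)]] by simp
next
  case (Suc p)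
  have "fst (Lam_rng (es ! Suc (q + p))) = fst (Lam_rng (es ! (q + p)))"
    using Suc.prems(2)[of "Suc p"] Suc.prems(2)[of p] by simp
  then have "snd (Lam_rng (es ! Suc (q + p))) = (snd (Lam_rng (es ! (q + p))) + m l) mod r"
    using Lam_path_same_level_step[OF assms(1)] Suc.prems by simp
  also have "\<dots> = (snd (Lam_rng (es ! q)) + Suc p * m l) mod r"
    using Suc by (simp add: mod_simps algebra_simps)
  finally show ?case by simp
qed

text \<open>By Bezout, \<open>x * m = g mod r\<close> for some \<open>x\<close>, where \<open>g = gcd m r\<close>; a suitable
  multiple of \<open>x\<close> then shifts \<open>k\<close> to \<open>k mod g\<close>.\<close>

lemma exists_shift_mod_lt_gcd:
  fixes k m r :: nat
  assumes "0 < r" and "0 < m" and "k < r"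
  shows "\<exists>p<r. (k + p * m) mod r < gcd m r"
proof -
  define g where "g = gcd m r"
  have "0 < g" and "g \<le> r" using assms by (simp_all add: g_def gcd_le2_nat)
  then have "k mod g < r" using mod_less_divisor order_less_le_trans by blast
  obtain x y where xy: "m * x = r * y + g" using bezout_nat[of m r] assms(2) g_def by auto
  have "g dvd r - k div g * g" by (simp add: g_def dvd_diff_nat)
  then obtain w where w: "r - k div g * g = g * w" by blast
  have "x * w * m = w * (m * x)" by (simp add: ac_simps)
  also have "\<dots> = r * (y * w) + g * w" using xy by (simp add: algebra_simps)
  finally have xwm: "x * w * m = r * (y * w) + (r - k div g * g)" using w by simp
  have "(k + x * w mod r * m) mod r = (k + x * w * m) mod r"
    by (rule mod_add_cong) (simp_all add: mod_mult_left_eq)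
  also have "k + x * w * m = (k mod g + r) + r * (y * w)"
    unfolding xwm using div_mult_mod_eq[of k g] \<open>k < r\<close> by arith
  also have "(k mod g + r + r * (y * w)) mod r = k mod g" using \<open>k mod g < r\<close> by simp
  finally have "(k + x * w mod r * m) mod r < gcd m r" using \<open>0 < g\<close> g_def by simp
  moreover have "x * w mod r < r" using \<open>0 < r\<close> by simp
  ultimately show ?thesis by blast
qed

lemma admissible_level_increases:
  assumes adm: "admissible n r m i s j t es" and "r \<ge> 1" and "\<forall>l\<le>n. m l \<ge> 1"
    and window: "q + (r - 1) < length es - 1"
  shows "fst (Lam_rng (es ! q)) < fst (Lam_rng (es ! (q + (r - 1))))"
proof (rule ccontr)
  define l where "l = fst (Lam_rng (es ! q))"
  define k where "k = snd (Lam_rng (es ! q))"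
  assume "\<not> fst (Lam_rng (es ! q)) < fst (Lam_rng (es ! (q + (r - 1))))"
  have path: "Lam_path n r m es" using adm unfolding admissible_def by blast
  have "q < length es" using window by linarith
  have level: "fst (Lam_rng (es ! (q + p))) = l" if "p \<le> r - 1" for p
  proof -
    have "q + p < length es" and "q + (r - 1) < length es" using that window by linarith+
    then show ?thesis
      using Lam_path_level_mono[OF path, of q "q + p"]
        Lam_path_level_mono[OF path, of "q + p" "q + (r - 1)"] that \<open>\<not> _ < _\<close> unfolding l_def by simp
  qed
  have "l \<le> n" using admissible_levels(2,3)[OF adm \<open>q < length es\<close>] unfolding l_def by simp
  moreover have "k < r"
    using Lam_E_levels(3)[OF Lam_path_nth_in_Lam_E[OF path \<open>q < length es\<close>]] unfolding k_def .
  ultimately obtain p where "p < r" and p: "(k + p * m l) mod r < gcd (m l) r"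
    using exists_shift_mod_lt_gcd[of r "m l" k] assms(2,3) by fastforce
  then have inner: "Suc (q + p) < length es" using window by simp
  have "\<And>p'. p' \<le> p \<Longrightarrow> fst (Lam_rng (es ! (q + p'))) = l" using level \<open>p < r\<close> by simp
  then have "snd (Lam_rng (es ! (q + p))) = (k + p * m l) mod r"
    using Lam_path_same_level_run[OF path, of q p l] inner unfolding k_def by simp
  moreover have "fst (Lam_rng (es ! (q + p))) = l" using level \<open>p < r\<close> by simp
  ultimately have "Lam_rng (es ! (q + p)) = (l, (k + p * m l) mod r)" by (simp add: prod_eq_iff)
  moreover have "i \<le> l" and "l \<le> j"
    using admissible_levels(1,2)[OF adm, of "q + p"] level[of p] inner \<open>p < r\<close> by simp_all
  ultimately show False using adm inner p unfolding admissible_def by fastforce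
qed

lemma admissible_length_le:
  assumes adm: "admissible n r m i s j t es" and "r \<ge> 1" and "\<forall>l\<le>n. m l \<ge> 1"
  shows "length es \<le> (n + 1) * r"
proof -
  let ?L = "\<lambda>q. fst (Lam_rng (es ! q))"
  have climb: "?L 0 + c \<le> ?L (c * (r - 1))" if "c * (r - 1) < length es - 1" for c
    using that
  proof (induction c)
    case (Suc c)
    then have "c * (r - 1) + (r - 1) < length es - 1" by (simp add: add.commute)
    then have "?L (c * (r - 1)) < ?L (c * (r - 1) + (r - 1))"
      by (rule admissible_level_increases[OF assms])
    with Suc show ?case by (simp add: add.commute)
  qed simp
  have "length es - 1 \<le> (n + 1) * (r - 1)"
  proof (rule ccontr)
    assume "\<not> ?thesis"
    then have "(n + 1) * (r - 1) < length es - 1" by simp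
    then have "?L 0 + (n + 1) \<le> ?L ((n + 1) * (r - 1))" by (rule climb)
    moreover have "(n + 1) * (r - 1) < length es" using \<open>_ < length es - 1\<close> by linarith
    then have "?L ((n + 1) * (r - 1)) \<le> n"
      using admissible_levels(2,3)[OF adm] by (meson order_trans)
    ultimately show False by linarith
  qed
  then show ?thesis using \<open>r \<ge> 1\<close> by (simp add: algebra_simps diff_le_eq)
qed

lemma finite_admissible:
  assumes "r \<ge> 1" and "\<forall>l\<le>n. m l \<ge> 1"
  shows "finite {es. admissible n r m i s j t es}"
proof (rule finite_subset)
  show "{es. admissible n r m i s j t es} \<subseteq> {es. set es \<subseteq> Lam_E n r \<and> length es \<le> (n + 1) * r}"
    using admissible_length_le[OF _ assms] by (auto simp: admissible_def Lam_path_def)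
  show "finite {es. set es \<subseteq> Lam_E n r \<and> length es \<le> (n + 1) * r}"
    by (rule finite_lists_length_le[OF finite_Lam_E])
qed

section \<open>Reachability in the graph \<open>\<overline>L\<close>\<close>

lemma finite_Lbar_V: "finite (Lbar_V n r m)"
  by (rule finite_subset[of _ "SIGMA i:{..n}. {..<gcd (m i) r}"]) (auto simp: Lbar_V_def S_set_def)

lemma Lbar_E_endpoints:
  shows "Lbar_src ` Lbar_E n r m \<subseteq> Lbar_V n r m" and "Lbar_rng ` Lbar_E n r m \<subseteq> Lbar_V n r m"
  by (auto simp: Lbar_E_def Lbar_V_def Lbar_src_def Lbar_rng_def)

lemma level_base_in_Lbar_V: "r \<ge> 1 \<Longrightarrow> i \<le> n \<Longrightarrow> (i, 0) \<in> Lbar_V n r m"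
  by (auto simp: Lbar_V_def S_set_def intro: Hset.base)

definition gcd_block :: "nat \<Rightarrow> (nat \<Rightarrow> nat) \<Rightarrow> (nat \<times> nat) set" where
  "gcd_block r m = {(l, k). k < gcd (m l) r}"

text \<open>Unlike admissible paths, paths that avoid \<^const>\<open>gcd_block\<close> in their interior
  can be prolonged through any vertex outside the block, and they are admissible between
  any two endpoints.\<close>

definition block_free_path :: "nat \<Rightarrow> nat \<Rightarrow> (nat \<Rightarrow> nat) \<Rightarrow> nat \<times> nat \<Rightarrow> nat \<times> nat
    \<Rightarrow> (nat \<times> nat \<times> nat) list \<Rightarrow> bool" where
  "block_free_path n r m w x es \<longleftrightarrow> Lam_path n r m es \<and>
     Lam_src r m (hd es) = w \<and> Lam_rng (last es) = x \<and>
     (\<forall>q. Suc q < length es \<longrightarrow> Lam_rng (es ! q) \<notin> gcd_block r m)"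

lemma Lbar_V_subset_gcd_block: "Lbar_V n r m \<subseteq> gcd_block r m"
  by (auto simp: Lbar_V_def S_set_def gcd_block_def)

lemma block_free_path_single:
  "e \<in> Lam_E n r \<Longrightarrow> block_free_path n r m (Lam_src r m e) (Lam_rng e) [e]"
  by (simp add: block_free_path_def Lam_path_def)

lemma block_free_path_snoc:
  assumes es: "block_free_path n r m w y es" and "e \<in> Lam_E n r" and "Lam_src r m e = y"
    and "y \<notin> gcd_block r m"
  shows "block_free_path n r m w (Lam_rng e) (es @ [e])"
proof -
  have path: "Lam_path n r m es" and "es \<noteq> []" and "Lam_rng (last es) = y"
    using es unfolding block_free_path_def Lam_path_def by auto
  then have last: "Lam_rng (es ! (length es - 1)) = y" by (simp add: last_conv_nth)
  have "Lam_path n r m (es @ [e])"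
    unfolding Lam_path_def
  proof (intro conjI allI impI)
    show "set (es @ [e]) \<subseteq> Lam_E n r" using path \<open>e \<in> Lam_E n r\<close> unfolding Lam_path_def by simp
    fix q assume q: "Suc q < length (es @ [e])"
    show "Lam_rng ((es @ [e]) ! q) = Lam_src r m ((es @ [e]) ! Suc q)"
    proof (cases "Suc q < length es")
      case True
      then show ?thesis using path unfolding Lam_path_def by (simp add: nth_append)
    next
      case False
      then have "q = length es - 1" using q by simp
      then show ?thesis using last \<open>es \<noteq> []\<close> \<open>Lam_src r m e = y\<close> by (simp add: nth_append)
    qed
  qed simp
  moreover have "Lam_rng ((es @ [e]) ! q) \<notin> gcd_block r m" if "Suc q < length (es @ [e])" for q
  proof (cases "Suc q < length es")
    case True
    then show ?thesis using es unfolding block_free_path_def by (simp add: nth_append)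
  next
    case False
    then have "q = length es - 1" using that by simp
    then show ?thesis using last \<open>es \<noteq> []\<close> \<open>y \<notin> gcd_block r m\<close> by (simp add: nth_append)
  qed
  ultimately show ?thesis using es \<open>es \<noteq> []\<close> unfolding block_free_path_def by simp
qed

lemma Lbar_edge_if_block_free_path:
  assumes "r \<ge> 1" and "\<forall>l\<le>n. m l \<ge> 1"
    and "w \<in> Lbar_V n r m" and "v \<in> Lbar_V n r m" and path: "block_free_path n r m w v es"
  shows "(w, v) \<in> edge_rel (Lbar_E n r m) Lbar_src Lbar_rng"
proof -
  obtain i s j t where w: "w = (i, s)" and v: "v = (j, t)" by fastforce
  have adm: "admissible n r m i s j t es"
    using path unfolding w v block_free_path_def admissible_def gcd_block_def by auto
  then have "0 < length es" unfolding admissible_def Lam_path_def by simp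
  from admissible_levels[OF adm this] have "i \<le> j" and "j \<le> n" by linarith+
  have "finite {es. admissible n r m i s j t es}" by (rule finite_admissible[OF assms(1,2)])
  moreover have "{es. admissible n r m i s j t es} \<noteq> {}" using adm by blast
  ultimately have "1 \<le> n_paths n r m i j s t"
    unfolding n_paths_def by (simp add: Suc_le_eq card_gt_0_iff)
  then have "(i, j, s, t, 1) \<in> Lbar_E n r m"
    using assms(3,4) \<open>i \<le> j\<close> \<open>j \<le> n\<close> unfolding w v by (simp add: Lbar_E_def Lbar_V_def)
  moreover have "((i, s), (j, t)) = (Lbar_src (i, j, s, t, 1), Lbar_rng (i, j, s, t, 1))"
    by (simp add: Lbar_src_def Lbar_rng_def)
  ultimately show ?thesis unfolding w v edge_rel_def by blast
qed

lemma Hset_reached_from_level_base: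
  assumes "r \<ge> 1" and "\<forall>l\<le>n. m l \<ge> 1" and "x \<in> Hset n r m"
  shows "\<exists>w\<in>Lbar_V n r m. (\<exists>i\<le>n. ((i, 0), w) \<in> (edge_rel (Lbar_E n r m) Lbar_src Lbar_rng)\<^sup>*) \<and>
           (x = w \<or> (\<exists>es. block_free_path n r m w x es))"
  using assms(3)
proof (induction rule: Hset.induct)
  case (base i)
  then show ?case using level_base_in_Lbar_V[OF assms(1)] by blast
next
  case (step e)
  let ?R = "edge_rel (Lbar_E n r m) Lbar_src Lbar_rng"
  let ?y = "Lam_src r m e"
  from step.IH obtain w where "w \<in> Lbar_V n r m" and w: "\<exists>i\<le>n. ((i, 0), w) \<in> ?R\<^sup>*"
    and y: "?y = w \<or> (\<exists>es. block_free_path n r m w ?y es)" by blast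
  show ?case
  proof (cases "?y \<in> gcd_block r m")
    case True
    obtain l k where lk: "?y = (l, k)" by fastforce
    have "l \<le> n"
      using Lam_E_levels(1)[where m = m, OF step.hyps(1)] Lam_E_levels(2)[OF step.hyps(1)] lk
      by simp
    moreover have "k < gcd (m l) r" using True lk by (simp add: gcd_block_def)
    ultimately have "?y \<in> Lbar_V n r m"
      using step.hyps(2) lk by (simp add: Lbar_V_def S_set_def)
    have "(w, ?y) \<in> ?R\<^sup>*"
    proof (cases "?y = w")
      case False
      then obtain es where "block_free_path n r m w ?y es" using y by blast
      then have "(w, ?y) \<in> ?R"
        by (rule Lbar_edge_if_block_free_path[OF assms(1,2) \<open>w \<in> Lbar_V n r m\<close> \<open>?y \<in> Lbar_V n r m\<close>])
      then show ?thesis by (rule r_into_rtrancl)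
    qed simp
    with w have "\<exists>i\<le>n. ((i, 0), ?y) \<in> ?R\<^sup>*" using rtrancl_trans by fast
    moreover have "block_free_path n r m ?y (Lam_rng e) [e]"
      by (rule block_free_path_single[OF step.hyps(1)])
    ultimately show ?thesis using \<open>?y \<in> Lbar_V n r m\<close> by blast
  next
    case False
    then have "?y \<noteq> w" using \<open>w \<in> Lbar_V n r m\<close> Lbar_V_subset_gcd_block by blast
    then obtain es where "block_free_path n r m w ?y es" using y by blast
    then have "block_free_path n r m w (Lam_rng e) (es @ [e])"
      using block_free_path_snoc step.hyps(1) False by blast
    then show ?thesis using \<open>w \<in> Lbar_V n r m\<close> w by blast
  qed
qed

lemma Lbar_V_reached_from_level_base:
  assumes "r \<ge> 1" and "\<forall>l\<le>n. m l \<ge> 1" and "v \<in> Lbar_V n r m"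
  shows "\<exists>i\<le>n. ((i, 0), v) \<in> (edge_rel (Lbar_E n r m) Lbar_src Lbar_rng)\<^sup>*"
proof -
  have "v \<in> Hset n r m" using assms(3) by (auto simp: Lbar_V_def S_set_def)
  then obtain w where "w \<in> Lbar_V n r m"
    and w: "\<exists>i\<le>n. ((i, 0), w) \<in> (edge_rel (Lbar_E n r m) Lbar_src Lbar_rng)\<^sup>*"
    and "v = w \<or> (\<exists>es. block_free_path n r m w v es)"
    using Hset_reached_from_level_base[OF assms(1,2)] by blast
  then have "(w, v) \<in> (edge_rel (Lbar_E n r m) Lbar_src Lbar_rng)\<^sup>*"
    using Lbar_edge_if_block_free_path[OF assms(1,2) \<open>w \<in> Lbar_V n r m\<close> assms(3)] by blast
  with w show ?thesis using rtrancl_trans by fast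
qed

theorem lemma3p11:
  fixes n r :: nat and m :: "nat \<Rightarrow> nat"
    and P :: "nat \<times> nat \<Rightarrow> 'a::cstar_algebra"
    and S :: "nat \<times> nat \<times> nat \<times> nat \<times> nat \<Rightarrow> 'a"
  assumes "n \<ge> 1" and "r \<ge> 1" and "\<forall>i\<le>n. m i \<ge> 1"
    and "CK_family (Lbar_V n r m) (Lbar_E n r m) Lbar_src Lbar_rng P S"
  shows "ideal_gen_in (cstar_gen (P ` Lbar_V n r m \<union> S ` Lbar_E n r m)) (\<Sum>i\<le>n. P (i,0))
           = cstar_gen (P ` Lbar_V n r m \<union> S ` Lbar_E n r m)"
proof -
  let ?W = "(\<lambda>i. (i, 0)) ` {..n}"
  have "(\<Sum>i\<le>n. P (i,0)) = sum P ?W" by (simp add: sum.reindex inj_on_def)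
  moreover have "?W \<subseteq> Lbar_V n r m" using level_base_in_Lbar_V[OF assms(2)] by blast
  moreover have "\<exists>w\<in>?W. (w, v) \<in> (edge_rel (Lbar_E n r m) Lbar_src Lbar_rng)\<^sup>*"
    if "v \<in> Lbar_V n r m" for v
    using Lbar_V_reached_from_level_base[OF assms(2,3) that] by blast
  ultimately show ?thesis
    using CK_family_full_if_reachable[OF assms(4) finite_Lbar_V Lbar_E_endpoints] by simp
qed

end
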